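(* Let $\Omega$ be a measure space and $Z:=L^2(\Omega)$. Let $(a^k)$ and $(b^k)$ be bounded sequences in $Z$. If $\min\{a^k,b^k\}\to 0$ in $Z$, then $\langle a^k,b^k\rangle\to 0$.
   Context: $\min\{a,b\}$ denotes the pointwise minimum of $a,b\in Z$, and $\langle\cdot,\cdot\rangle$ is the inner product of $L^2(\Omega)$. *)

theory Defs
  imports "HOL-Analysis.Analysis"
begin

definition L2 :: "'a measure \<Rightarrow> ('a \<Rightarrow> real) set" where
  "L2 M = {f. f \<in> borel_measurable M \<and> integrable M (\<lambda>x. (f x)\<^sup>2)}"

definition L2_norm :: "'a measure \<Rightarrow> ('a \<Rightarrow> real) \<Rightarrow> real" where
  "L2_norm M f = sqrt (LINT x|M. (f x)\<^sup>2)"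

definition L2_inner :: "'a measure \<Rightarrow> ('a \<Rightarrow> real) \<Rightarrow> ('a \<Rightarrow> real) \<Rightarrow> real" where
  "L2_inner M f g = (LINT x|M. f x * g x)"

end

theory Submission
  imports Defs
begin

(* Pointwise a b = min(a,b) max(a,b) and max(a,b)^2 <= a^2 + b^2. Cauchy-Schwarz therefore
   gives |<a,b>| <= ||min(a,b)|| (||a||^2 + ||b||^2)^(1/2), and the second factor stays
   bounded along bounded sequences. *)

lemma L2_D:
  assumes "f \<in> L2 M"
  shows "f \<in> borel_measurable M" "integrable M (\<lambda>x. (f x)\<^sup>2)"
  using assms by (simp_all add: L2_def)

lemma L2_norm_nonneg: "0 \<le> L2_norm M f"
  by (simp add: L2_norm_def)

lemma L2_norm_sq: "f \<in> L2 M \<Longrightarrow> (L2_norm M f)\<^sup>2 = (LINT x|M. (f x)\<^sup>2)"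
  by (simp add: L2_norm_def)

lemma L2_dominated:
  assumes "f \<in> L2 M" "g \<in> L2 M" "h \<in> borel_measurable M"
    and "\<And>x. (h x)\<^sup>2 \<le> (f x)\<^sup>2 + (g x)\<^sup>2"
  shows "h \<in> L2 M"
proof -
  have "integrable M (\<lambda>x. (f x)\<^sup>2 + (g x)\<^sup>2)"
    using assms(1,2) by (simp add: L2_D)
  then have "integrable M (\<lambda>x. (h x)\<^sup>2)"
    by (rule Bochner_Integration.integrable_bound) (use assms(3,4) in auto)
  with assms(3) show ?thesis
    by (simp add: L2_def)
qed

lemma L2_min:
  assumes "f \<in> L2 M" "g \<in> L2 M"
  shows "(\<lambda>x. min (f x) (g x)) \<in> L2 M"
  using L2_D(1)[OF assms(1), measurable] L2_D(1)[OF assms(2), measurable]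
  by (rule_tac L2_dominated[OF assms]) (auto simp: min_def)

lemma L2_max:
  assumes "f \<in> L2 M" "g \<in> L2 M"
  shows "(\<lambda>x. max (f x) (g x)) \<in> L2 M"
  using L2_D(1)[OF assms(1), measurable] L2_D(1)[OF assms(2), measurable]
  by (rule_tac L2_dominated[OF assms]) (auto simp: max_def)

lemma L2_norm_max_le:
  assumes "f \<in> L2 M" "g \<in> L2 M"
  shows "(L2_norm M (\<lambda>x. max (f x) (g x)))\<^sup>2 \<le> (L2_norm M f)\<^sup>2 + (L2_norm M g)\<^sup>2"
proof -
  have "(L2_norm M (\<lambda>x. max (f x) (g x)))\<^sup>2 = (LINT x|M. (max (f x) (g x))\<^sup>2)"
    using L2_max[OF assms] by (rule L2_norm_sq)
  also have "\<dots> \<le> (LINT x|M. (f x)\<^sup>2 + (g x)\<^sup>2)"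
    using L2_D(2)[OF L2_max[OF assms]] L2_D(2)[OF assms(1)] L2_D(2)[OF assms(2)]
    by (intro integral_mono) (auto simp: max_def)
  also have "\<dots> = (L2_norm M f)\<^sup>2 + (L2_norm M g)\<^sup>2"
    using L2_D(2)[OF assms(1)] L2_D(2)[OF assms(2)] assms by (simp add: L2_norm_sq)
  finally show ?thesis .
qed

lemma L2_inner_min_max: "L2_inner M (\<lambda>x. min (f x) (g x)) (\<lambda>x. max (f x) (g x)) = L2_inner M f g"
  unfolding L2_inner_def by (rule Bochner_Integration.integral_cong) (auto simp: min_def max_def)

lemma nn_integral_abs_sq_L2:
  assumes "f \<in> L2 M"
  shows "(\<integral>\<^sup>+x. ennreal \<bar>f x\<bar> ^ 2 \<partial>M) = ennreal ((L2_norm M f)\<^sup>2)"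
proof -
  have "(\<integral>\<^sup>+x. ennreal \<bar>f x\<bar> ^ 2 \<partial>M) = (\<integral>\<^sup>+x. ennreal ((f x)\<^sup>2) \<partial>M)"
    by (simp add: ennreal_power)
  also have "\<dots> = ennreal ((L2_norm M f)\<^sup>2)"
    using assms by (simp add: L2_D L2_norm_sq nn_integral_eq_integral)
  finally show ?thesis .
qed

lemma L2_Cauchy_Schwarz:
  assumes "f \<in> L2 M" "g \<in> L2 M"
  shows "\<bar>L2_inner M f g\<bar> \<le> L2_norm M f * L2_norm M g"
proof -
  have [measurable]: "f \<in> borel_measurable M" "g \<in> borel_measurable M"
    using assms by (simp_all add: L2_D)
  define I where "I = (\<integral>\<^sup>+x. ennreal \<bar>f x\<bar> * ennreal \<bar>g x\<bar> \<partial>M)"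
  have "I\<^sup>2 \<le> ennreal ((L2_norm M f * L2_norm M g)\<^sup>2)"
    using Cauchy_Schwarz_nn_integral[of "\<lambda>x. ennreal \<bar>f x\<bar>" M "\<lambda>x. ennreal \<bar>g x\<bar>"]
    by (simp add: I_def nn_integral_abs_sq_L2 assms power_mult_distrib ennreal_mult)
  then have "enn2real (I\<^sup>2) \<le> (L2_norm M f * L2_norm M g)\<^sup>2"
    by (intro enn2real_leI) simp_all
  then have "(enn2real I)\<^sup>2 \<le> (L2_norm M f * L2_norm M g)\<^sup>2"
    by (simp add: power2_eq_square enn2real_mult)
  then have "enn2real I \<le> L2_norm M f * L2_norm M g"
    by (rule power2_le_imp_le) (simp add: L2_norm_nonneg)
  moreover have "\<bar>L2_inner M f g\<bar> \<le> enn2real I"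
    using integral_abs_bound[of M "\<lambda>x. f x * g x"]
    by (simp add: L2_inner_def I_def integral_eq_nn_integral abs_mult ennreal_mult)
  ultimately show ?thesis by linarith
qed

lemma L2_inner_le_min_norm:
  assumes "f \<in> L2 M" "g \<in> L2 M"
  shows "\<bar>L2_inner M f g\<bar>
    \<le> L2_norm M (\<lambda>x. min (f x) (g x)) * sqrt ((L2_norm M f)\<^sup>2 + (L2_norm M g)\<^sup>2)"
proof -
  have "\<bar>L2_inner M f g\<bar>
      \<le> L2_norm M (\<lambda>x. min (f x) (g x)) * L2_norm M (\<lambda>x. max (f x) (g x))"
    using L2_Cauchy_Schwarz[OF L2_min[OF assms] L2_max[OF assms]]
    by (simp add: L2_inner_min_max)
  also have "\<dots> \<le> L2_norm M (\<lambda>x. min (f x) (g x)) * sqrt ((L2_norm M f)\<^sup>2 + (L2_norm M g)\<^sup>2)"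
    using L2_norm_max_le[OF assms]
    by (intro mult_left_mono real_le_rsqrt) (simp_all add: L2_norm_nonneg)
  finally show ?thesis .
qed

theorem lemma2p2:
  fixes M :: "'a measure" and a b :: "nat \<Rightarrow> 'a \<Rightarrow> real"
  assumes "\<And>k. a k \<in> L2 M" and "\<And>k. b k \<in> L2 M"
    and "\<exists>C. \<forall>k. L2_norm M (a k) \<le> C"
    and "\<exists>C. \<forall>k. L2_norm M (b k) \<le> C"
    and "(\<lambda>k. L2_norm M (\<lambda>x. min (a k x) (b k x))) \<longlonglongrightarrow> 0"
  shows "(\<lambda>k. L2_inner M (a k) (b k)) \<longlonglongrightarrow> 0"
proof -
  obtain Ca Cb where Ca: "\<And>k. L2_norm M (a k) \<le> Ca" and Cb: "\<And>k. L2_norm M (b k) \<le> Cb"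
    using assms(3,4) by blast
  define K where "K = sqrt (Ca\<^sup>2 + Cb\<^sup>2)"
  have "norm (L2_inner M (a k) (b k)) \<le> L2_norm M (\<lambda>x. min (a k x) (b k x)) * K" for k
  proof -
    have "(L2_norm M (a k))\<^sup>2 + (L2_norm M (b k))\<^sup>2 \<le> Ca\<^sup>2 + Cb\<^sup>2"
      using Ca[of k] Cb[of k] by (intro add_mono power_mono) (simp_all add: L2_norm_nonneg)
    then have "sqrt ((L2_norm M (a k))\<^sup>2 + (L2_norm M (b k))\<^sup>2) \<le> K"
      unfolding K_def by (rule real_sqrt_le_mono)
    then have "L2_norm M (\<lambda>x. min (a k x) (b k x)) * sqrt ((L2_norm M (a k))\<^sup>2 + (L2_norm M (b k))\<^sup>2)
        \<le> L2_norm M (\<lambda>x. min (a k x) (b k x)) * K"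
      by (rule mult_left_mono) (rule L2_norm_nonneg)
    with L2_inner_le_min_norm[OF assms(1,2)] show ?thesis
      by (simp only: real_norm_def) (rule order_trans)
  qed
  then have "\<forall>\<^sub>F k in sequentially.
      norm (L2_inner M (a k) (b k)) \<le> L2_norm M (\<lambda>x. min (a k x) (b k x)) * K"
    by (simp add: always_eventually)
  then show ?thesis
    by (rule Lim_null_comparison) (rule tendsto_mult_left_zero[OF assms(5)])
qed

end
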